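(* Let $M\in\Lambda$ be a closed $\lambda$-term and $N\in\Lambda$. The following two conditions are equivalent, for every natural number $n$: (1) $M\rightarrow_v^n N$ and $N$ is in $\rightarrow_v$-normal form; (2) $[\![M]\!]\rightarrow^n t$ in $\Phi$ for some term $t$ that is in normal form in $\Phi$ and satisfies $\langle\!\langle t\rangle\!\rangle=N$.
   Context: $\lambda$-terms are $M::=x\mid \lambda x.M\mid MN$, with $x$ ranging over a denumerable set $\Upsilon$ of variables equipped with a fixed total order; $\Lambda$ is the set of all terms. $FV(M)$ is the sequence (without repetitions, ordered by the fixed order on $\Upsilon$) of free variables of $M$; $M$ is closed if this sequence is empty. Values are $V::=x\mid\lambda x.M$. Weak call-by-value reduction $\rightarrow_v$ is the smallest relation such that $(\lambda x.M)V\rightarrow_v M\{V/x\}$ for every value $V$, and such that $M\rightarrow_v N$ implies $ML\rightarrow_v NL$ and $LM\rightarrow_v LN$ (no reduction under $\lambda$). $\rightarrow_v^n$ denotes $n$ steps. The constructor rewrite system $\Phi$ has signature: a binary function symbol $\mathbf{app}$ and, for every $M\in\Lambda$ and $x\in\Upsilon$, a constructor symbol $c_{x,M}$ whose arity is the length of $FV(\lambda x.M)$. Constructor terms are the closed terms built from constructors only. To every $M\in\Lambda$ associate a (possibly open) term $[\![M]\!]$: $[\![x]\!]=x$; $[\![\lambda x.M]\!]=c_{x,M}(x_1,\dots,x_n)$ where $FV(\lambda x.M)=x_1,\dots,x_n$; $[\![MN]\!]=\mathbf{app}([\![M]\!],[\![N]\!])$. The rules of $\Phi$ are all $\mathbf{app}(c_{x,M}(x_1,\dots,x_n),x)\rightarrow[\![M]\!]$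 with $FV(\lambda x.M)=x_1,\dots,x_n$. Rewriting is call-by-value: $t\rightarrow u$ if $u$ is obtained from $t$ by replacing a subterm $l\sigma$ by $r\sigma$, where $l\rightarrow r$ is a rule and the substitution $\sigma$ maps variables to constructor terms. A term is in normal form if no rewrite step applies. To every term $t$ of $\Phi$ associate a $\lambda$-term $\langle\!\langle t\rangle\!\rangle$: $\langle\!\langle x\rangle\!\rangle=x$; $\langle\!\langle \mathbf{app}(u,v)\rangle\!\rangle=\langle\!\langle u\rangle\!\rangle\langle\!\langle v\rangle\!\rangle$; $\langle\!\langle c_{x,M}(t_1,\dots,t_n)\rangle\!\rangle=(\lambda x.M)\{\langle\!\langle t_1\rangle\!\rangle/x_1,\dots,\langle\!\langle t_n\rangle\!\rangle/x_n\}$ where $FV(\lambda x.M)=x_1,\dots,x_n$. *)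

theory Defs
  imports Main
begin

text \<open>Variables are natural numbers (a denumerable set with a fixed total order).\<close>
type_synonym var = nat

datatype lterm = Var var | Lam var lterm | Ap lterm lterm

fun fvs :: "lterm \<Rightarrow> var set" where
  "fvs (Var x) = {x}"
| "fvs (Lam x M) = fvs M - {x}"
| "fvs (Ap M N) = fvs M \<union> fvs N"

definition closed :: "lterm \<Rightarrow> bool" where
  "closed M \<longleftrightarrow> fvs M = {}"

definition fv_list :: "lterm \<Rightarrow> var list" where
  "fv_list M = sorted_list_of_set (fvs M)"

text \<open>Simultaneous substitution (only ever applied to closed terms in the
  statement, so it coincides with capture-avoiding substitution there).\<close>
fun lsubst :: "(var \<Rightarrow> lterm) \<Rightarrow> lterm \<Rightarrow> lterm" where
  "lsubst \<sigma> (Var x) = \<sigma> x"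
| "lsubst \<sigma> (Lam y M) = Lam y (lsubst (\<sigma>(y := Var y)) M)"
| "lsubst \<sigma> (Ap M N) = Ap (lsubst \<sigma> M) (lsubst \<sigma> N)"

definition subst1 :: "lterm \<Rightarrow> var \<Rightarrow> lterm \<Rightarrow> lterm" where
  "subst1 M x V = lsubst (Var(x := V)) M"

fun is_value :: "lterm \<Rightarrow> bool" where
  "is_value (Var _) = True"
| "is_value (Lam _ _) = True"
| "is_value (Ap _ _) = False"

inductive beta_v :: "lterm \<Rightarrow> lterm \<Rightarrow> bool" where
  beta: "is_value V \<Longrightarrow> beta_v (Ap (Lam x M) V) (subst1 M x V)"
| appL: "beta_v M N \<Longrightarrow> beta_v (Ap M L) (Ap N L)"
| appR: "beta_v M N \<Longrightarrow> beta_v (Ap L M) (Ap L N)"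

definition lnf :: "lterm \<Rightarrow> bool" where
  "lnf M \<longleftrightarrow> \<not> (\<exists>N. beta_v M N)"

text \<open>Terms of the rewrite system \<Phi>: variables, app, and constructors
  c_{x,M} (represented by the pair x, M) applied to argument lists.\<close>
datatype rterm = RVar var | App rterm rterm | Con var lterm "rterm list"

fun wf_rterm :: "rterm \<Rightarrow> bool" where
  "wf_rterm (RVar _) = True"
| "wf_rterm (App t u) = (wf_rterm t \<and> wf_rterm u)"
| "wf_rterm (Con x M ts) = (length ts = length (fv_list (Lam x M)) \<and> (\<forall>t\<in>set ts. wf_rterm t))"

fun is_cterm :: "rterm \<Rightarrow> bool" where
  "is_cterm (RVar _) = False"
| "is_cterm (App _ _) = False"
| "is_cterm (Con x M ts) = (length ts = length (fv_list (Lam x M)) \<and> (\<forall>t\<in>set ts. is_cterm t))"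

fun rsubst :: "(var \<Rightarrow> rterm) \<Rightarrow> rterm \<Rightarrow> rterm" where
  "rsubst \<sigma> (RVar x) = \<sigma> x"
| "rsubst \<sigma> (App t u) = App (rsubst \<sigma> t) (rsubst \<sigma> u)"
| "rsubst \<sigma> (Con x M ts) = Con x M (map (rsubst \<sigma>) ts)"

fun enc :: "lterm \<Rightarrow> rterm" where
  "enc (Var x) = RVar x"
| "enc (Lam x M) = Con x M (map RVar (fv_list (Lam x M)))"
| "enc (Ap M N) = App (enc M) (enc N)"

definition list_subst :: "var list \<Rightarrow> 'a list \<Rightarrow> (var \<Rightarrow> 'a) \<Rightarrow> var \<Rightarrow> 'a" where
  "list_subst xs ts d y = (case map_of (zip xs ts) y of Some t \<Rightarrow> t | None \<Rightarrow> d y)"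

text \<open>Call-by-value rewriting in \<Phi>: the rule
  app(c_{x,M}(x_1,...,x_n), x) \<rightarrow> [[M]] instantiated by a substitution into
  constructor terms, closed under all contexts.\<close>
inductive rstep :: "rterm \<Rightarrow> rterm \<Rightarrow> bool" where
  rule: "\<lbrakk> length vs = length (fv_list (Lam x M)); \<forall>s\<in>set vs. is_cterm s; is_cterm v \<rbrakk>
     \<Longrightarrow> rstep (App (Con x M vs) v)
               (rsubst ((list_subst (fv_list (Lam x M)) vs RVar)(x := v)) (enc M))"
| ctxL: "rstep t t' \<Longrightarrow> rstep (App t u) (App t' u)"
| ctxR: "rstep t t' \<Longrightarrow> rstep (App u t) (App u t')"
| ctxC: "rstep t t' \<Longrightarrow> rstep (Con x M (ss @ t # us)) (Con x M (ss @ t' # us))"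

definition rnf :: "rterm \<Rightarrow> bool" where
  "rnf t \<longleftrightarrow> \<not> (\<exists>u. rstep t u)"

fun dec :: "rterm \<Rightarrow> lterm" where
  "dec (RVar x) = Var x"
| "dec (App t u) = Ap (dec t) (dec u)"
| "dec (Con x M ts) = lsubst (list_subst (fv_list (Lam x M)) (map dec ts) Var) (Lam x M)"

end

theory Submission
  imports Defs
begin

(*
  Call a term of Phi an application tree of constructor terms if it is built by app from
  constructor terms. The encoding of a closed lambda-term is such a tree, and the class is
  preserved by rewriting. Constructor terms decode to closed abstractions, i.e. to closed
  values, so an instance of a rule app(c_{x,M}(...), v) -> [[M]] decodes exactly to a
  beta_v-redex and its contractum; conversely every beta_v-redex in the decoding of such a
  tree sits on an app node whose two subtrees are constructor terms. Hence decoding is a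
  strong bisimulation between rewriting in Phi and beta_v on these trees, which yields the
  step-by-step correspondence of reductions and of normal forms.
*)

lemma finite_fvs: "finite (fvs M)"
  by (induction M) auto

lemma set_fv_list: "set (fv_list M) = fvs M"
  by (simp add: fv_list_def finite_fvs)

lemma list_subst_in_set:
  assumes "length xs = length ts" and "y \<in> set xs"
  shows "list_subst xs ts d y \<in> set ts"
    and "list_subst xs (map f ts) d' y = f (list_subst xs ts d y)"
proof -
  obtain t where t: "map_of (zip xs ts) y = Some t"
    using assms map_of_zip_is_Some by metis
  then have "(y, t) \<in> set (zip xs ts)"
    by (rule map_of_SomeD)
  then show "list_subst xs ts d y \<in> set ts"
    using t by (simp add: list_subst_def set_zip_rightD)
  have "map_of (zip xs (map f ts)) y = Some (f t)"
    using t by (simp add: zip_map2 map_of_map)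
  with t show "list_subst xs (map f ts) d' y = f (list_subst xs ts d y)"
    by (simp add: list_subst_def)
qed

lemma list_subst_map_self:
  "list_subst xs (map f xs) d y = (if y \<in> set xs then f y else d y)"
  by (induction xs) (auto simp: list_subst_def split: option.splits)

lemma lsubst_cong: "\<forall>z\<in>fvs M. \<sigma> z = \<tau> z \<Longrightarrow> lsubst \<sigma> M = lsubst \<tau> M"
  by (induction M arbitrary: \<sigma> \<tau>) auto

lemma lsubst_Var: "lsubst Var M = M"
  by (induction M) (auto simp: fun_upd_triv)

lemma lsubst_closed: "fvs M = {} \<Longrightarrow> lsubst \<sigma> M = M"
  using lsubst_cong[of M \<sigma> Var] by (simp add: lsubst_Var)

lemma fvs_lsubst: "fvs (lsubst \<sigma> M) \<subseteq> (\<Union>z\<in>fvs M. fvs (\<sigma> z))"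
proof (induction M arbitrary: \<sigma>)
  case (Lam y M)
  have "fvs (lsubst (\<sigma>(y := Var y)) M) - {y} \<subseteq> (\<Union>z\<in>fvs M - {y}. fvs (\<sigma> z))"
  proof
    fix a assume a: "a \<in> fvs (lsubst (\<sigma>(y := Var y)) M) - {y}"
    then obtain z where z: "z \<in> fvs M" "a \<in> fvs ((\<sigma>(y := Var y)) z)"
      using Lam.IH[of "\<sigma>(y := Var y)"] by blast
    with a have "z \<noteq> y"
      by (auto split: if_splits)
    with z show "a \<in> (\<Union>z\<in>fvs M - {y}. fvs (\<sigma> z))"
      by auto
  qed
  then show ?case by simp
next
  case (Ap M1 M2)
  then show ?case by fastforce
qed auto

text \<open>
  \<open>lsubst\<close> does not rename bound variables; the hypothesis that \<open>\<sigma> z\<close> mentions no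
  variable other than \<open>z\<close> rules out capture.
\<close>
lemma lsubst_lsubst:
  "\<forall>z\<in>fvs M. fvs (\<sigma> z) \<subseteq> {z} \<Longrightarrow>
   lsubst \<tau> (lsubst \<sigma> M) = lsubst (\<lambda>z. lsubst \<tau> (\<sigma> z)) M"
proof (induction M arbitrary: \<sigma> \<tau>)
  case (Lam y M)
  have "lsubst (\<tau>(y := Var y)) (lsubst (\<sigma>(y := Var y)) M)
      = lsubst (\<lambda>z. lsubst (\<tau>(y := Var y)) ((\<sigma>(y := Var y)) z)) M"
    using Lam by (intro Lam.IH) auto
  also have "\<dots> = lsubst ((\<lambda>z. lsubst \<tau> (\<sigma> z))(y := Var y)) M"
  proof (rule lsubst_cong, intro ballI)
    fix z assume "z \<in> fvs M"
    show "lsubst (\<tau>(y := Var y)) ((\<sigma>(y := Var y)) z)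
        = ((\<lambda>z. lsubst \<tau> (\<sigma> z))(y := Var y)) z"
    proof (cases "z = y")
      case False
      with \<open>z \<in> fvs M\<close> have "fvs (\<sigma> z) \<subseteq> {z}"
        using Lam.prems by auto
      with False show ?thesis
        by (auto intro!: lsubst_cong)
    qed simp
  qed
  finally show ?case by simp
qed auto

lemma rsubst_RVar: "rsubst RVar t = t"
  by (induction t) (auto intro: map_idI)

lemma dec_rsubst_enc: "dec (rsubst \<sigma> (enc M)) = lsubst (dec \<circ> \<sigma>) M"
proof (induction M)
  case (Lam y P)
  have "dec (rsubst \<sigma> (enc (Lam y P))) =
     lsubst (list_subst (fv_list (Lam y P)) (map (dec \<circ> \<sigma>) (fv_list (Lam y P))) Var) (Lam y P)"
    by (simp add: comp_def del: lsubst.simps)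
  also have "\<dots> = lsubst (dec \<circ> \<sigma>) (Lam y P)"
    by (rule lsubst_cong) (simp add: list_subst_map_self set_fv_list del: fvs.simps)
  finally show ?case .
qed auto

lemma dec_enc: "dec (enc M) = M"
  using dec_rsubst_enc[of RVar M] by (simp add: rsubst_RVar lsubst_Var comp_def)

lemma is_cterm_wf_rterm: "is_cterm t \<Longrightarrow> wf_rterm t"
  by (induction t) auto

lemma is_cterm_rnf: "is_cterm t \<Longrightarrow> rnf t"
proof -
  have "rstep t u \<Longrightarrow> \<not> is_cterm t" for u
    by (induction rule: rstep.induct) auto
  then show "is_cterm t \<Longrightarrow> rnf t"
    by (auto simp: rnf_def)
qed

lemma is_value_dec_cterm: "is_cterm v \<Longrightarrow> is_value (dec v)"
  by (cases v) auto

lemma fvs_dec_cterm: "is_cterm t \<Longrightarrow> fvs (dec t) = {}"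
proof (induction t)
  case (Con x M ts)
  let ?xs = "fv_list (Lam x M)"
  have "fvs (list_subst ?xs (map dec ts) Var z) = {}" if "z \<in> fvs (Lam x M)" for z
  proof -
    have "length ?xs = length ts" and "z \<in> set ?xs"
      using Con.prems that by (simp_all add: set_fv_list del: fvs.simps)
    then show ?thesis
      using Con list_subst_in_set(1)[of ?xs ts z RVar]
        list_subst_in_set(2)[where f = dec and d = RVar and d' = Var] by auto
  qed
  then show ?case
    using fvs_lsubst[of "list_subst ?xs (map dec ts) Var" "Lam x M"] by auto
qed auto

lemma dec_rule_instance:
  assumes len: "length vs = length (fv_list (Lam x M))"
    and vs: "\<forall>s\<in>set vs. is_cterm s" and v: "is_cterm v"
  shows "dec (rsubst ((list_subst (fv_list (Lam x M)) vs RVar)(x := v)) (enc M))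
       = subst1 (lsubst ((list_subst (fv_list (Lam x M)) (map dec vs) Var)(x := Var x)) M) x (dec v)"
proof -
  let ?xs = "fv_list (Lam x M)"
  let ?\<rho> = "list_subst ?xs (map dec vs) Var"
  have \<rho>: "?\<rho> z = dec (list_subst ?xs vs RVar z)" "fvs (?\<rho> z) = {}"
    if "z \<in> fvs M" and "z \<noteq> x" for z
  proof -
    have "length ?xs = length vs" and "z \<in> set ?xs"
      using len that by (simp_all add: set_fv_list)
    then show "?\<rho> z = dec (list_subst ?xs vs RVar z)" and "fvs (?\<rho> z) = {}"
      using vs fvs_dec_cterm list_subst_in_set(1)[of ?xs vs z RVar]
        list_subst_in_set(2)[where f = dec and d = RVar and d' = Var] by auto
  qed
  have "subst1 (lsubst (?\<rho>(x := Var x)) M) x (dec v)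
      = lsubst (\<lambda>z. lsubst (Var(x := dec v)) ((?\<rho>(x := Var x)) z)) M"
    unfolding subst1_def by (rule lsubst_lsubst) (use \<rho> in auto)
  also have "\<dots> = lsubst (dec \<circ> (list_subst ?xs vs RVar)(x := v)) M"
    by (rule lsubst_cong) (use \<rho> in \<open>auto simp: lsubst_closed\<close>)
  finally show ?thesis
    by (simp add: dec_rsubst_enc)
qed

fun app_cterm :: "rterm \<Rightarrow> bool" where
  "app_cterm (RVar _) = False"
| "app_cterm (App t u) = (app_cterm t \<and> app_cterm u)"
| "app_cterm (Con x M ts) = is_cterm (Con x M ts)"

lemma app_cterm_wf_rterm: "app_cterm t \<Longrightarrow> wf_rterm t"
proof (induction t)
  case (Con x M ts)
  then show ?case
    using is_cterm_wf_rterm[of "Con x M ts"] by (simp only: app_cterm.simps)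
qed auto

lemma app_cterm_rsubst_enc:
  "\<forall>z\<in>fvs P. is_cterm (\<sigma> z) \<Longrightarrow> app_cterm (rsubst \<sigma> (enc P))"
proof (induction P)
  case (Var x)
  then show ?case by (cases "\<sigma> x") auto
next
  case (Ap P Q)
  then show ?case by simp
qed (auto simp: set_fv_list simp del: fvs.simps)

lemma app_cterm_enc: "closed M \<Longrightarrow> app_cterm (enc M)"
  using app_cterm_rsubst_enc[of M RVar] by (simp add: closed_def rsubst_RVar)

lemma rstep_simulation:
  "rstep t u \<Longrightarrow> app_cterm t \<Longrightarrow> app_cterm u \<and> beta_v (dec t) (dec u)"
proof (induction rule: rstep.induct)
  case (rule vs x M v)
  let ?xs = "fv_list (Lam x M)"
  have "app_cterm (rsubst ((list_subst ?xs vs RVar)(x := v)) (enc M))"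
  proof (rule app_cterm_rsubst_enc, intro ballI)
    fix z assume z: "z \<in> fvs M"
    show "is_cterm (((list_subst ?xs vs RVar)(x := v)) z)"
    proof (cases "z = x")
      case False
      then have "length ?xs = length vs" and "z \<in> set ?xs"
        using rule z by (simp_all add: set_fv_list)
      then show ?thesis
        using False rule list_subst_in_set(1)[of ?xs vs z RVar] by auto
    qed (use rule in simp)
  qed
  moreover have "beta_v (dec (App (Con x M vs) v))
      (subst1 (lsubst ((list_subst ?xs (map dec vs) Var)(x := Var x)) M) x (dec v))"
    using beta_v.beta[OF is_value_dec_cterm[OF rule(3)]] by simp
  ultimately show ?case
    using dec_rule_instance[OF rule(1-3)] by simp
next
  case (ctxC t t' x M ss us)
  then show ?case
    using is_cterm_rnf[of t] by (auto simp: rnf_def)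
qed (auto intro: beta_v.appL beta_v.appR)

lemma beta_v_simulation:
  "app_cterm t \<Longrightarrow> beta_v (dec t) N \<Longrightarrow> \<exists>u. rstep t u \<and> dec u = N"
proof (induction t arbitrary: N)
  case (Con x M ts)
  then show ?case by (auto elim: beta_v.cases)
next
  case (App t1 t2)
  from App.prems(2) show ?case
  proof (cases rule: beta_v.cases)
    case (beta V y P)
    then obtain x M vs where t1: "t1 = Con x M vs"
      using App.prems(1) by (cases t1) auto
    have "is_cterm t2"
      using App.prems(1) beta by (cases t2) auto
    moreover have "length vs = length (fv_list (Lam x M))" and "\<forall>s\<in>set vs. is_cterm s"
      using App.prems(1) t1 by auto
    ultimately show ?thesis
      using beta t1 dec_rule_instance rstep.rule by fastforce
  next
    case (appL A B)
    then obtain u where "rstep t1 u" and "dec u = B"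
      using App by auto
    then show ?thesis
      using appL by (auto intro: rstep.ctxL)
  next
    case (appR A B)
    then obtain u where "rstep t2 u" and "dec u = B"
      using App by auto
    then show ?thesis
      using appR by (auto intro: rstep.ctxR)
  qed
qed simp

lemma rnf_iff_lnf_dec: "app_cterm t \<Longrightarrow> rnf t \<longleftrightarrow> lnf (dec t)"
  unfolding rnf_def lnf_def using rstep_simulation beta_v_simulation by blast

lemma relpowp_invariant:
  assumes "(R ^^ n) t u" and "P t" and "\<And>t u. R t u \<Longrightarrow> P t \<Longrightarrow> P u"
  shows "P u"
  using assms(1,2)
proof (induction n arbitrary: u)
  case (Suc n)
  then show ?case
    using assms(3) by auto
qed simp

lemma relpowp_bisimulation:
  assumes forward: "\<And>t u. R t u \<Longrightarrow> P t \<Longrightarrow> P u \<and> S (f t) (f u)"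
    and backward: "\<And>t y. P t \<Longrightarrow> S (f t) y \<Longrightarrow> \<exists>u. R t u \<and> f u = y"
    and "P t"
  shows "(S ^^ n) (f t) y \<longleftrightarrow> (\<exists>u. (R ^^ n) t u \<and> f u = y)"
  using \<open>P t\<close>
proof (induction n arbitrary: t)
  case (Suc n)
  show ?case
  proof
    assume "(S ^^ Suc n) (f t) y"
    then obtain z where "S (f t) z" and "(S ^^ n) z y"
      using relpowp_Suc_D2 by metis
    moreover obtain u where "R t u" and "f u = z"
      using backward[OF Suc.prems \<open>S (f t) z\<close>] by blast
    ultimately show "\<exists>w. (R ^^ Suc n) t w \<and> f w = y"
      using Suc.IH forward[OF _ Suc.prems] relpowp_Suc_I2 by metis
  next
    assume "\<exists>w. (R ^^ Suc n) t w \<and> f w = y"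
    then obtain u w where "R t u" and "(R ^^ n) u w" and "f w = y"
      using relpowp_Suc_D2 by metis
    then show "(S ^^ Suc n) (f t) y"
      using Suc.IH forward[OF _ Suc.prems] relpowp_Suc_I2 by metis
  qed
qed auto

theorem theorem1:
  fixes M N :: lterm and n :: nat
  assumes "closed M"
  shows "((beta_v ^^ n) M N \<and> lnf N) \<longleftrightarrow>
         (\<exists>t. wf_rterm t \<and> (rstep ^^ n) (enc M) t \<and> rnf t \<and> dec t = N)"
proof -
  have start: "app_cterm (enc M)"
    using assms by (rule app_cterm_enc)
  then have reachable: "app_cterm t" if "(rstep ^^ n) (enc M) t" for t
    using that rstep_simulation by (blast intro: relpowp_invariant)
  have "(beta_v ^^ n) M N \<longleftrightarrow> (\<exists>t. (rstep ^^ n) (enc M) t \<and> dec t = N)"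
    using relpowp_bisimulation[where P = app_cterm and f = dec and R = rstep and S = beta_v,
        OF rstep_simulation beta_v_simulation start]
    by (simp add: dec_enc)
  then show ?thesis
    using reachable rnf_iff_lnf_dec app_cterm_wf_rterm by blast
qed

end
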